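(* Let $N_0\in\mathbb{N}$. Let $E=E(a_1,\dots,a_n)$ and $E'=E(b_1,\dots,b_n)$ be bounded ellipsoids in $\mathbb{R}^{2n}$ ($0<a_1\le\dots\le a_n<\infty$, $0<b_1\le\dots\le b_n<\infty$). Suppose an increasing sequence $d_1\le d_2\le\dots$ of real numbers is obtained from the sequence $c_1^{\mathrm{EH}}(E)\le c_2^{\mathrm{EH}}(E)\le\dots$ by removing at most $N_0$ terms, and is also obtained from $c_1^{\mathrm{EH}}(E')\le c_2^{\mathrm{EH}}(E')\le\dots$ by removing at most $N_0$ terms. Then $E=E'$, i.e. $a_i=b_i$ for all $i$. (In other words, a bounded ellipsoid can be recovered uniquely from its Ekeland–Hofer sequence with at most $N_0$ terms removed.)
   Context: $E(a_1,\dots,a_n)=\{z\in\mathbb{C}^n:\sum_j|z_j|^2/a_j<1\}$. The Ekeland–Hofer capacities on ellipsoids are given as follows: writing the numbers $m\,a_i\pi$ ($m\in\mathbb{N}$, $1\le i\le n$) in increasing order with repetitions as $\delta_1\le \delta_2\le\dots$, one has $c_k^{\mathrm{EH}}(E(a_1,\dots,a_n))=\delta_k$. Removing terms means deleting entries (counted with multiplicity) from the sequence. *)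

theory Defs
  imports Complex_Main
begin

text \<open>Ellipsoid E(a_1,...,a_n) with parameters a :: nat => real, indices 1..n.
  The index set of the numbers m * a_i * pi with m >= 1 and 1 <= i <= n.\<close>
definition EH_index :: "nat \<Rightarrow> (nat \<times> nat) set" where
  "EH_index n = {(m, i). 1 \<le> m \<and> 1 \<le> i \<and> i \<le> n}"

definition is_EH_listing :: "nat \<Rightarrow> (nat \<Rightarrow> real) \<Rightarrow> (nat \<Rightarrow> real) \<Rightarrow> bool" where
  "is_EH_listing n a \<delta> \<longleftrightarrow>
     mono_on {1..} \<delta> \<and>
     (\<exists>\<beta>. bij_betw \<beta> {1..} (EH_index n) \<and>
        (\<forall>k\<ge>1. \<delta> k = real (fst (\<beta> k)) * a (snd (\<beta> k)) * pi))"

definition cEH :: "nat \<Rightarrow> (nat \<Rightarrow> real) \<Rightarrow> nat \<Rightarrow> real" where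
  "cEH n a = (SOME \<delta>. is_EH_listing n a \<delta>)"

definition obtained_by_removing_at_most ::
  "nat \<Rightarrow> (nat \<Rightarrow> real) \<Rightarrow> (nat \<Rightarrow> real) \<Rightarrow> bool" where
  "obtained_by_removing_at_most N \<delta> d \<longleftrightarrow>
     (\<exists>S \<sigma>. S \<subseteq> {1..} \<and> finite S \<and> card S \<le> N \<and>
        strict_mono_on {1..} \<sigma> \<and> \<sigma> ` {1..} = {1..} - S \<and>
        (\<forall>k\<ge>1. d k = \<delta> (\<sigma> k)))"

end

theory Submission
  imports Defs "HOL-Library.Multiset" "HOL-Library.Product_Lexorder" "HOL-Computational_Algebra.Primes"
begin

(* Removing finitely many terms does not change how often a value t occurs in the sequence once
   t exceeds every removed term; and t occurs in the Ekeland-Hofer sequence of E(a) as often as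
   there are indices i with t in pi a_i N. So these counts agree for a and b for all large t.
   If the multisets {a_i} and {b_i} differed, let x be the least value with different
   multiplicities and take t = p x pi for a large prime p such that p x is a multiple of no larger
   a_i or b_i (each of the finitely many larger values rules out at most one prime). Then only
   the values below x, whose multiplicities agree, and x itself contribute to the count at t,
   a contradiction. Equal multisets with sorted enumerations give a = b. *)

lemma exists_mono_enumeration:
  fixes I :: "'a::linorder set" and v :: "'a \<Rightarrow> 'b::linorder"
  assumes "infinite I" and "\<And>t. finite {p\<in>I. v p \<le> t}"
  obtains \<beta> where "bij_betw \<beta> {1::nat..} I" and "mono_on {1..} (\<lambda>k. v (\<beta> k))"
proof -
  \<comment> \<open>Rank p by the number of elements preceding it in the lexicographic order of (v p, p);
     the order of 'a only breaks ties of v.\<close>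
  define below where "below p = {q\<in>I. (v q, q) < (v p, p)}" for p
  define rk where "rk p = card (below p)" for p
  have finite_below: "finite (below p)" for p
    by (rule finite_subset[OF _ assms(2)[of "v p"]]) (auto simp: below_def)
  have rk_less: "rk q < rk p" if "q \<in> I" "(v q, q) < (v p, p)" for p q
    unfolding rk_def using that finite_below
    by (intro psubset_card_mono) (auto simp: below_def intro: less_trans)
  have inj: "inj_on rk I"
    by (rule inj_onI, rule ccontr) (metis less_irrefl neq_iff prod.inject rk_less)
  have rk_below: "rk ` below p = {..<rk p}" for p
  proof (rule card_subset_eq)
    show "rk ` below p \<subseteq> {..<rk p}"
      using rk_less by (auto simp: below_def)
    show "card (rk ` below p) = card {..<rk p}"
      using inj_on_subset[OF inj, of "below p"] by (auto simp: card_image below_def rk_def[of p])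
  qed simp
  have rk_surj: "k \<in> rk ` I" for k
  proof -
    have "infinite (rk ` I)"
      using inj assms(1) finite_imageD by blast
    then have "\<exists>p\<in>I. k < rk p"
      using finite_nat_set_iff_bounded_le[of "rk ` I"] by (auto simp: not_le)
    then obtain p where "p \<in> I" "k < rk p" ..
    then have "k \<in> rk ` below p"
      using rk_below by simp
    moreover have "below p \<subseteq> I"
      by (auto simp: below_def)
    ultimately show ?thesis
      by blast
  qed
  define \<beta> where "\<beta> k = inv_into I rk (k - 1)" for k
  have rk_\<beta>: "rk (\<beta> k) = k - 1" and \<beta>_in: "\<beta> k \<in> I" for k
    unfolding \<beta>_def using rk_surj by (auto simp: f_inv_into_f inv_into_into)
  have "bij_betw \<beta> {1..} I"
  proof (rule bij_betw_byWitness[where f' = "\<lambda>p. Suc (rk p)"])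
    show "\<forall>k\<in>{1..}. Suc (rk (\<beta> k)) = k"
      using rk_\<beta> by simp
    show "\<forall>p\<in>I. \<beta> (Suc (rk p)) = p"
      using inj by (simp add: \<beta>_def)
  qed (use \<beta>_in in auto)
  moreover have "mono_on {1..} (\<lambda>k. v (\<beta> k))"
  proof (rule mono_onI, rule ccontr)
    fix r s :: nat
    assume "r \<in> {1..}" "s \<in> {1..}" "r \<le> s" "\<not> v (\<beta> r) \<le> v (\<beta> s)"
    then have "rk (\<beta> s) < rk (\<beta> r)"
      using rk_less[of "\<beta> s" "\<beta> r"] \<beta>_in by (simp add: not_le)
    then show False
      using \<open>r \<in> {1..}\<close> \<open>r \<le> s\<close> by (simp add: rk_\<beta>)
  qed
  ultimately show ?thesis
    using that by blast
qed

lemma finite_nat_multiples_le: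
  fixes c t :: real
  assumes "0 < c"
  shows "finite {m::nat. real m * c \<le> t}"
proof (rule finite_subset)
  show "{m::nat. real m * c \<le> t} \<subseteq> {..nat \<lceil>t / c\<rceil>}"
  proof
    fix m
    assume "m \<in> {m. real m * c \<le> t}"
    then have "real m \<le> t / c"
      using assms by (simp add: le_divide_eq)
    also have "\<dots> \<le> real (nat \<lceil>t / c\<rceil>)"
      by (rule real_nat_ceiling_ge)
    finally show "m \<in> {..nat \<lceil>t / c\<rceil>}"
      by simp
  qed
qed simp

lemma is_EH_listing_cEH:
  assumes "n \<ge> 1" and "\<forall>i\<in>{1..n}. 0 < a i"
  shows "is_EH_listing n a (cEH n a)"
proof -
  define v where "v p = real (fst p) * a (snd p) * pi" for p :: "nat \<times> nat"
  have "infinite (EH_index n)"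
  proof
    assume "finite (EH_index n)"
    moreover have "(\<lambda>m. (m, 1)) ` {1..} \<subseteq> EH_index n"
      using assms(1) by (auto simp: EH_index_def)
    ultimately have "finite ((\<lambda>m::nat. (m, 1::nat)) ` {1..})"
      by (rule finite_subset[rotated])
    then show False
      using infinite_Ici[of "1::nat"] by (simp add: finite_image_iff inj_on_def)
  qed
  moreover have "finite {p\<in>EH_index n. v p \<le> t}" for t
  proof (rule finite_subset)
    show "{p\<in>EH_index n. v p \<le> t} \<subseteq> (\<Union>i\<in>{1..n}. {m. real m * (a i * pi) \<le> t} \<times> {i})"
      by (force simp: EH_index_def v_def mult.assoc)
    show "finite (\<Union>i\<in>{1..n}. {m. real m * (a i * pi) \<le> t} \<times> {i})"
      using assms(2) by (auto intro!: finite_nat_multiples_le)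
  qed
  ultimately obtain \<beta> where "bij_betw \<beta> {1::nat..} (EH_index n)" and "mono_on {1..} (\<lambda>k. v (\<beta> k))"
    by (rule exists_mono_enumeration)
  then have "is_EH_listing n a (\<lambda>k. v (\<beta> k))"
    by (auto simp: is_EH_listing_def v_def)
  then show ?thesis
    unfolding cEH_def by (rule someI[where P = "is_EH_listing n a"])
qed

definition multiple_count :: "real multiset \<Rightarrow> real \<Rightarrow> nat" where
  "multiple_count A t = size {# y \<in># A. \<exists>k::nat \<ge> 1. real k * y = t #}"

lemma card_level_set_EH_listing:
  assumes "is_EH_listing n a \<delta>" and "\<forall>i\<in>{1..n}. a i \<noteq> 0"
  shows "card {k. 1 \<le> k \<and> \<delta> k = t} = multiple_count (image_mset a (mset_set {1..n})) (t / pi)"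
proof -
  define v where "v p = real (fst p) * a (snd p) * pi" for p
  obtain \<beta> where bij: "bij_betw \<beta> {1..} (EH_index n)" and \<delta>_eq: "\<forall>k\<ge>1. \<delta> k = v (\<beta> k)"
    using assms(1) unfolding is_EH_listing_def v_def by blast
  define Q where "Q = {p \<in> EH_index n. v p = t}"
  have "{k. 1 \<le> k \<and> \<delta> k = t} = {k \<in> {1..}. v (\<beta> k) = t}"
    using \<delta>_eq by auto
  then have "\<beta> ` {k. 1 \<le> k \<and> \<delta> k = t} = {p \<in> \<beta> ` {1..}. v p = t}"
    by auto
  also have "\<dots> = Q"
    using bij_betw_imp_surj_on[OF bij] by (simp add: Q_def)
  finally have image_eq: "\<beta> ` {k. 1 \<le> k \<and> \<delta> k = t} = Q" .
  have "inj_on \<beta> {k. 1 \<le> k \<and> \<delta> k = t}"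
    using bij_betw_imp_inj_on[OF bij] by (rule inj_on_subset) auto
  then have "card {k. 1 \<le> k \<and> \<delta> k = t} = card Q"
    unfolding image_eq[symmetric] by (rule card_image[symmetric])
  also have "\<dots> = card (snd ` Q)"
  proof (rule card_image[symmetric], rule inj_onI)
    fix p q
    assume "p \<in> Q" "q \<in> Q" "snd p = snd q"
    then have "real (fst p) * a (snd p) * pi = real (fst q) * a (snd p) * pi"
      by (simp add: Q_def v_def)
    moreover from \<open>p \<in> Q\<close> have "a (snd p) \<noteq> 0"
      using assms(2) by (auto simp: Q_def EH_index_def)
    ultimately show "p = q"
      using \<open>snd p = snd q\<close> by (simp add: prod_eq_iff)
  qed
  also have "snd ` Q = {i \<in> {1..n}. \<exists>m::nat \<ge> 1. v (m, i) = t}"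
  proof (intro equalityI subsetI)
    fix i
    assume "i \<in> snd ` Q"
    then show "i \<in> {i \<in> {1..n}. \<exists>m::nat \<ge> 1. v (m, i) = t}"
      by (auto simp: Q_def EH_index_def)
  next
    fix i
    assume "i \<in> {i \<in> {1..n}. \<exists>m::nat \<ge> 1. v (m, i) = t}"
    then obtain m where "(m, i) \<in> Q"
      by (auto simp: Q_def EH_index_def)
    then show "i \<in> snd ` Q"
      by (rule rev_image_eqI) simp
  qed
  finally show ?thesis
    by (simp add: multiple_count_def filter_mset_image_mset v_def eq_divide_eq)
qed

lemma card_level_set_eq_if_obtained_by_removing:
  assumes "obtained_by_removing_at_most N \<delta> d"
  obtains T where "\<And>t. T < t \<Longrightarrow> card {k. 1 \<le> k \<and> d k = t} = card {j. 1 \<le> j \<and> \<delta> j = t}"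
proof -
  obtain S \<sigma> where "finite S" and \<sigma>_mono: "strict_mono_on {1..} \<sigma>"
    and \<sigma>_image: "\<sigma> ` {1..} = {1..} - S" and d_eq: "\<forall>k\<ge>1. d k = \<delta> (\<sigma> k)"
    using assms unfolding obtained_by_removing_at_most_def by blast
  define T where "T = Max (insert 0 (\<delta> ` S))"
  have "card {k. 1 \<le> k \<and> d k = t} = card {j. 1 \<le> j \<and> \<delta> j = t}" if "T < t" for t
  proof -
    have removed_below: "\<delta> j < t" if "j \<in> S" for j
    proof -
      have "\<delta> j \<le> T"
        unfolding T_def using \<open>finite S\<close> that by (intro Max_ge) auto
      then show ?thesis
        using \<open>T < t\<close> by simp
    qed
    have image_eq: "\<sigma> ` {k. 1 \<le> k \<and> d k = t} = {j. 1 \<le> j \<and> \<delta> j = t}"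
    proof (intro equalityI subsetI)
      fix j
      assume "j \<in> \<sigma> ` {k. 1 \<le> k \<and> d k = t}"
      then obtain k where "1 \<le> k" "d k = t" "j = \<sigma> k"
        by blast
      moreover have "\<sigma> k \<in> {1..} - S"
        using \<sigma>_image \<open>1 \<le> k\<close> by blast
      ultimately show "j \<in> {j. 1 \<le> j \<and> \<delta> j = t}"
        using d_eq by simp
    next
      fix j
      assume j: "j \<in> {j. 1 \<le> j \<and> \<delta> j = t}"
      then have "j \<in> \<sigma> ` {1..}"
        using \<sigma>_image removed_below by force
      then obtain k where "1 \<le> k" "j = \<sigma> k"
        by auto
      then show "j \<in> \<sigma> ` {k. 1 \<le> k \<and> d k = t}"
        using j d_eq by auto
    qed
    have "inj_on \<sigma> {k. 1 \<le> k \<and> d k = t}"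
      using strict_mono_on_imp_inj_on[OF \<sigma>_mono] by (rule inj_on_subset) auto
    then show ?thesis
      unfolding image_eq[symmetric] by (rule card_image[symmetric])
  qed
  then show ?thesis
    using that by blast
qed

lemma prime_eq_if_common_multiple:
  fixes x y :: real
  assumes "0 < x" "x < y" "prime p" "prime q"
    and "real k * y = real p * x" "real l * y = real q * x"
  shows "p = q"
proof -
  have "0 < k"
    using assms(1,3,5) prime_gt_0_nat[of p] by (cases "k = 0") auto
  have "real k * x < real k * y"
    using assms(2) \<open>0 < k\<close> by simp
  also have "\<dots> = real p * x"
    by (rule assms(5))
  finally have "real k * x < real p * x" .
  then have "k < p"
    using assms(1) by simp
  have "real (p * l) * x = real (q * k) * x"
  proof -
    have "real (p * l) * x = real l * (real k * y)"
      using assms(5) by simp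
    also have "\<dots> = real k * (real q * x)"
      using assms(6) by (simp add: ac_simps)
    finally show ?thesis
      by (simp add: ac_simps)
  qed
  then have "p * l = q * k"
    using assms(1) by (simp flip: of_nat_mult)
  then have "p dvd q * k"
    by (metis dvd_triv_left)
  moreover have "\<not> p dvd k"
    using \<open>0 < k\<close> \<open>k < p\<close> by (auto dest: dvd_imp_le)
  ultimately have "p dvd q"
    using assms(3) prime_dvd_mult_nat by blast
  then show ?thesis
    using assms(3,4) primes_dvd_imp_eq by blast
qed

lemma exists_prime_multiple_avoiding:
  fixes x T :: real and Y :: "real set"
  assumes "0 < x" "finite Y" "\<forall>y\<in>Y. x < y"
  obtains p :: nat where "prime p" "T < real p * x" "\<And>y k. y \<in> Y \<Longrightarrow> real k * y \<noteq> real p * x"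
proof -
  define bad where "bad y = {p. prime p \<and> (\<exists>k. real k * y = real p * x)}" for y
  have "finite (bad y)" if "y \<in> Y" for y
  proof (cases "bad y = {}")
    case False
    then obtain p where "p \<in> bad y"
      by blast
    then have "bad y \<subseteq> {p}"
      using prime_eq_if_common_multiple[OF assms(1)] assms(3) that by (auto simp: bad_def)
    then show ?thesis
      by (rule finite_subset) simp
  qed simp
  then have "finite ((\<Union>y\<in>Y. bad y) \<union> {..nat \<lceil>T / x\<rceil>})"
    using assms(2) by blast
  then have "infinite ({p. prime p} - ((\<Union>y\<in>Y. bad y) \<union> {..nat \<lceil>T / x\<rceil>}))"
    by (rule Diff_infinite_finite) (rule primes_infinite)
  then obtain p where "p \<in> {p. prime p} - ((\<Union>y\<in>Y. bad y) \<union> {..nat \<lceil>T / x\<rceil>})"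
    using infinite_imp_nonempty by blast
  then have "prime p" "p \<notin> (\<Union>y\<in>Y. bad y)" "nat \<lceil>T / x\<rceil> < p"
    by (auto simp: not_le)
  have "T < real p * x"
  proof -
    have "T / x \<le> real (nat \<lceil>T / x\<rceil>)"
      by (rule real_nat_ceiling_ge)
    also have "\<dots> < real p"
      using \<open>nat \<lceil>T / x\<rceil> < p\<close> by simp
    finally show ?thesis
      using assms(1) by (simp add: divide_less_eq)
  qed
  with \<open>prime p\<close> \<open>p \<notin> (\<Union>y\<in>Y. bad y)\<close> show ?thesis
    using that by (auto simp: bad_def)
qed

lemma multiset_eq_if_multiple_count_eq:
  fixes A B :: "real multiset"
  assumes "\<forall>y\<in>#A. 0 < y" and "\<forall>y\<in>#B. 0 < y"
    and "\<And>t. T < t \<Longrightarrow> multiple_count A t = multiple_count B t"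
  shows "A = B"
proof (rule ccontr)
  assume "A \<noteq> B"
  define D where "D = {y. count A y \<noteq> count B y}"
  have "finite D"
    by (rule finite_subset[of _ "set_mset (A + B)"]) (auto simp: D_def not_in_iff)
  moreover have "D \<noteq> {}"
    using \<open>A \<noteq> B\<close> by (auto simp: D_def multiset_eq_iff)
  ultimately have "Min D \<in> D"
    by (rule Min_in)
  have count_below: "count A y = count B y" if "y < Min D" for y
    using Min_le[OF \<open>finite D\<close>, of y] that by (auto simp: D_def)
  define x where "x = Min D"
  have "x \<in># A + B"
    using \<open>Min D \<in> D\<close> by (auto simp: x_def D_def not_in_iff)
  then have "0 < x"
    using assms(1,2) by auto
  define Y where "Y = {y \<in> set_mset (A + B). x < y}"
  obtain p where "prime p" "T < real p * x" and avoid: "\<And>y k. y \<in> Y \<Longrightarrow> real k * y \<noteq> real p * x"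
    by (rule exists_prime_multiple_avoiding[of x Y T]) (use \<open>0 < x\<close> in \<open>auto simp: Y_def\<close>)
  define t where "t = real p * x"
  define P where "P y \<longleftrightarrow> (\<exists>k::nat \<ge> 1. real k * y = t)" for y
  have "P x"
    using prime_ge_1_nat[OF \<open>prime p\<close>] by (auto simp: P_def t_def)
  have multiple_count_t: "multiple_count M t = size {# y \<in># M. y < x \<and> P y #} + count M x"
    if "set_mset M \<subseteq> set_mset (A + B)" for M
  proof -
    have "{# y \<in># M. P y #} = {# y \<in># M. (y < x \<and> P y) \<or> y = x #}"
    proof (rule filter_mset_cong)
      fix y
      assume "y \<in># M"
      then show "P y \<longleftrightarrow> (y < x \<and> P y) \<or> y = x"
        using that avoid[of y] \<open>P x\<close> by (cases y x rule: linorder_cases) (auto simp: P_def t_def Y_def)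
    qed simp
    also have "\<dots> = {# y \<in># M. y < x \<and> P y #} + {# y \<in># M. y = x #}"
      by (rule multiset_eqI) auto
    finally show ?thesis
      by (simp add: multiple_count_def P_def filter_eq_replicate_mset)
  qed
  have "{# y \<in># A. y < x \<and> P y #} = {# y \<in># B. y < x \<and> P y #}"
    by (rule multiset_eqI) (simp add: count_below x_def)
  moreover have "multiple_count A t = multiple_count B t"
    using assms(3) \<open>T < real p * x\<close> by (simp add: t_def)
  ultimately have "count A x = count B x"
    by (simp add: multiple_count_t)
  with \<open>Min D \<in> D\<close> show False
    by (simp add: x_def D_def)
qed

lemma sorted_map_upt_Suc:
  assumes "\<forall>i\<in>{m..<n}. f i \<le> f (Suc i)"
  shows "sorted (map f [m..<Suc n])"
  using assms by (auto simp: sorted_iff_nth_Suc nth_append simp del: upt_Suc)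

lemma eq_on_if_image_mset_eq_sorted:
  fixes a b :: "nat \<Rightarrow> 'a::linorder"
  assumes "\<forall>i\<in>{1..<n}. a i \<le> a (Suc i)" and "\<forall>i\<in>{1..<n}. b i \<le> b (Suc i)"
    and "image_mset a (mset_set {1..n}) = image_mset b (mset_set {1..n})"
  shows "\<forall>i\<in>{1..n}. a i = b i"
proof -
  have mset_map_upt: "mset (map f [1..<Suc n]) = image_mset f (mset_set {1..n})" for f :: "nat \<Rightarrow> 'a"
    unfolding mset_map mset_upt atLeastLessThanSuc_atLeastAtMost ..
  have "mset (map a [1..<Suc n]) = mset (map b [1..<Suc n])"
    using assms(3) by (simp only: mset_map_upt)
  then have "map a [1..<Suc n] = map b [1..<Suc n]"
    using sorted_map_upt_Suc[OF assms(1)] sorted_map_upt_Suc[OF assms(2)]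
    by (metis properties_for_sort)
  then show ?thesis
    by (simp add: atLeastLessThanSuc_atLeastAtMost del: upt_Suc)
qed

theorem mainTheorem3:
  fixes N0 n :: nat and a b d :: "nat \<Rightarrow> real"
  assumes "n \<ge> 1"
    and "\<forall>i\<in>{1..n}. 0 < a i" and "\<forall>i\<in>{1..<n}. a i \<le> a (Suc i)"
    and "\<forall>i\<in>{1..n}. 0 < b i" and "\<forall>i\<in>{1..<n}. b i \<le> b (Suc i)"
    and "mono_on {1..} d"
    and "obtained_by_removing_at_most N0 (cEH n a) d"
    and "obtained_by_removing_at_most N0 (cEH n b) d"
  shows "\<forall>i\<in>{1..n}. a i = b i"
proof -
  let ?A = "image_mset a (mset_set {1..n})" and ?B = "image_mset b (mset_set {1..n})"
  have listing_a: "is_EH_listing n a (cEH n a)" and listing_b: "is_EH_listing n b (cEH n b)"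
    using is_EH_listing_cEH assms(1,2,4) by blast+
  obtain Ta where Ta: "\<And>t. Ta < t \<Longrightarrow> card {k. 1 \<le> k \<and> d k = t} = card {j. 1 \<le> j \<and> cEH n a j = t}"
    using card_level_set_eq_if_obtained_by_removing[OF assms(7)] by blast
  obtain Tb where Tb: "\<And>t. Tb < t \<Longrightarrow> card {k. 1 \<le> k \<and> d k = t} = card {j. 1 \<le> j \<and> cEH n b j = t}"
    using card_level_set_eq_if_obtained_by_removing[OF assms(8)] by blast
  have "multiple_count ?A s = multiple_count ?B s" if "max Ta Tb / pi < s" for s
  proof -
    have "Ta < s * pi" and "Tb < s * pi"
      using that by (simp_all add: divide_less_eq)
    then show ?thesis
      using Ta Tb card_level_set_EH_listing[OF listing_a, of "s * pi"]
        card_level_set_EH_listing[OF listing_b, of "s * pi"] assms(2,4) by force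
  qed
  then have "?A = ?B"
    by (rule multiset_eq_if_multiple_count_eq[rotated 2]) (use assms(2,4) in auto)
  then show ?thesis
    using eq_on_if_image_mset_eq_sorted assms(3,5) by blast
qed

end
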